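(* Let $F$ be a nontrivial finite group and let $\tfrac12<p<1$. Let $R_n$ be the stationary random walk on the lamplighter group $F\wr\mathbb{Z}$ with parameter $p$. Then $R_n$ is recurrent if $p\ge\frac{|F|^2}{|F|^2+1}$, and transient if $p<\frac{|F|^2}{|F|^2+1}$.
   Context: Elements of $F\wr\mathbb{Z}$ are pairs $((L(i))_{i\in\mathbb{Z}},x)$ with $L:\mathbb{Z}\to F$ finitely supported (only finitely many $L(i)\neq \mathrm{id}_F$) and $x\in\mathbb{Z}$; the identity is the configuration with all lamps $\mathrm{id}_F$ and $x=0$. The stationary random walk with parameter $p$ is defined as follows. Let $(S_n)_{n\ge0}$ be the Markov chain on $\mathbb{Z}$ with $S_0=0$ and $\Pr(S_{n+1}=x+1\mid S_n=x)$ equal to $p$ if $x<0$, $\tfrac12$ if $x=0$, $1-p$ if $x>0$, and $\Pr(S_{n+1}=x-1\mid S_n=x)$ equal to $1-p$ if $x<0$, $\tfrac12$ if $x=0$, $p$ if $x>0$. Let $(U_n,V_n)_{n\ge1}$ be i.i.d. pairs of independent uniform random elements of $F$, independent of $(S_n)$. Set $L_0\equiv\mathrm{id}_F$ and $R_n=((L_n(i))_i,S_n)$, where $L_{n+1}(i)=L_n(i)$ if $i\notin\{S_n,S_{n+1}\}$, $L_{n+1}(S_n)=U_{n+1}$, and $L_{n+1}(S_{n+1})=V_{n+1}$. Recurrent means $R_n$ returns to the identity infinitely often almost surely; transient means it returns only finitely often almost surely. *)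

theory Defs
  imports "HOL-Probability.Probability" "HOL-Algebra.Group"
begin

text \<open>The boolean c is a
Bernoulli(p) coin (used when x is nonzero), d is a fair coin (used at x = 0).\<close>
definition base_step :: "int \<Rightarrow> bool \<Rightarrow> bool \<Rightarrow> int" where
  "base_step x c d =
     (if x < 0 then (if c then x + 1 else x - 1)
      else if x = 0 then (if d then x + 1 else x - 1)
      else (if c then x - 1 else x + 1))"

definition lamp_noise :: "('a, 'b) monoid_scheme \<Rightarrow> real \<Rightarrow> (bool \<times> bool \<times> 'a \<times> 'a) pmf" where
  "lamp_noise F p = pair_pmf (bernoulli_pmf p)
     (pair_pmf (bernoulli_pmf (1/2)) (pair_pmf (pmf_of_set (carrier F)) (pmf_of_set (carrier F))))"

definition lamp_space :: "('a, 'b) monoid_scheme \<Rightarrow> real \<Rightarrow> (bool \<times> bool \<times> 'a \<times> 'a) stream measure" where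
  "lamp_space F p = stream_space (measure_pmf (lamp_noise F p))"

definition lamp_id :: "('a, 'b) monoid_scheme \<Rightarrow> (int \<Rightarrow> 'a) \<times> int" where
  "lamp_id F = ((\<lambda>i. \<one>\<^bsub>F\<^esub>), 0)"

text \<open>The stationary random walk R_n = (L_n, S_n); the n-th stream entry is
(C_{n+1}, D_{n+1}, U_{n+1}, V_{n+1}).\<close>
fun lamp_walk :: "('a, 'b) monoid_scheme \<Rightarrow> (bool \<times> bool \<times> 'a \<times> 'a) stream \<Rightarrow> nat \<Rightarrow> (int \<Rightarrow> 'a) \<times> int" where
  "lamp_walk F \<omega> 0 = lamp_id F"
| "lamp_walk F \<omega> (Suc n) =
     (let (L, x) = lamp_walk F \<omega> n; (c, d, u, v) = \<omega> !! n; y = base_step x c d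
      in (fun_upd (fun_upd L x u) y v, y))"

definition lamp_recurrent :: "('a, 'b) monoid_scheme \<Rightarrow> real \<Rightarrow> bool" where
  "lamp_recurrent F p =
     (AE \<omega> in lamp_space F p. infinite {n. lamp_walk F \<omega> n = lamp_id F})"

definition lamp_transient :: "('a, 'b) monoid_scheme \<Rightarrow> real \<Rightarrow> bool" where
  "lamp_transient F p =
     (AE \<omega> in lamp_space F p. finite {n. lamp_walk F \<omega> n = lamp_id F})"

end

theory Submission
  imports Defs
begin

text \<open>Only the set \<open>Z\<close> of lit lamps and the position \<open>x\<close> matter for returning to the
  identity, and \<open>(Z, x)\<close> is itself a walk driven by i.i.d. noise. Given the path of the
  base chain, every lamp it touches ends up uniform, so the probability of being at the
  identity at time \<open>n\<close> is \<open>E[q ^ #touched sites; S\<^sub>n = 0]\<close> with \<open>q = 1 / |F|\<close>.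
  A nearest-neighbour path touches the whole interval \<open>[-a, b]\<close> it ranges over, and the
  expected number of visits to \<open>0\<close> of the base chain before it leaves \<open>[-a, b]\<close> is of
  order \<open>min (r ^ a) (r ^ b)\<close> with \<open>r = p / (1 - p)\<close> (gambler's ruin). Grouping paths by
  their range shows that the return probabilities are summable iff \<open>q\<^sup>2 r < 1\<close>.
  Borel-Cantelli turns summability into transience, and a last-exit decomposition turns
  divergence into recurrence.\<close>

section \<open>Nearest-neighbour paths\<close>

definition mean_step :: "(int \<Rightarrow> real) \<Rightarrow> (int \<Rightarrow> real) \<Rightarrow> int \<Rightarrow> real" where
  "mean_step \<pi> g x = \<pi> x * g (x + 1) + (1 - \<pi> x) * g (x - 1)"

fun nn_paths :: "nat \<Rightarrow> int \<Rightarrow> int list set" where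
  "nn_paths 0 x = {[x]}"
| "nn_paths (Suc n) x = (#) x ` (nn_paths n (x + 1) \<union> nn_paths n (x - 1))"

text \<open>The expectation of \<open>f\<close> over the trajectory \<open>[S\<^sub>0, \<dots>, S\<^sub>n]\<close> of the
  nearest-neighbour chain started at \<open>x\<close> that steps up from \<open>y\<close> with probability \<open>\<pi> y\<close>.\<close>
fun path_exp :: "(int \<Rightarrow> real) \<Rightarrow> nat \<Rightarrow> int \<Rightarrow> (int list \<Rightarrow> real) \<Rightarrow> real" where
  "path_exp \<pi> 0 x f = f [x]"
| "path_exp \<pi> (Suc n) x f = mean_step \<pi> (\<lambda>y. path_exp \<pi> n y (\<lambda>l. f (x # l))) x"

lemma mean_step_const [simp]: "mean_step \<pi> (\<lambda>_. c) x = c"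
  by (simp add: mean_step_def algebra_simps)

lemma mean_step_mono:
  assumes "\<pi> x \<in> {0..1}" "g (x + 1) \<le> h (x + 1)" "g (x - 1) \<le> h (x - 1)"
  shows "mean_step \<pi> g x \<le> mean_step \<pi> h x"
  using assms unfolding mean_step_def by (auto intro!: add_mono mult_left_mono)

lemma mean_step_add: "mean_step \<pi> (\<lambda>y. f y + g y) x = mean_step \<pi> f x + mean_step \<pi> g x"
  by (simp add: mean_step_def algebra_simps)

lemma mean_step_cmult: "mean_step \<pi> (\<lambda>y. c * f y) x = c * mean_step \<pi> f x"
  by (simp add: mean_step_def algebra_simps)

lemma mean_step_affine: "mean_step \<pi> (\<lambda>y. c * (a - f y)) x = c * (a - mean_step \<pi> f x)"
  by (simp add: mean_step_def algebra_simps)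

lemma length_nn_paths: "l \<in> nn_paths n x \<Longrightarrow> length l = Suc n"
  by (induction n arbitrary: x l) auto

lemma nn_paths_not_Nil: "l \<in> nn_paths n x \<Longrightarrow> l \<noteq> []"
  by (cases n) auto

lemma start_in_nn_paths: "l \<in> nn_paths n x \<Longrightarrow> x \<in> set l"
  by (cases n) auto

lemma last_in_nn_paths: "l \<in> nn_paths n x \<Longrightarrow> last l \<in> set l"
  by (simp add: nn_paths_not_Nil)

lemma nn_paths_dist: "l \<in> nn_paths n x \<Longrightarrow> z \<in> set l \<Longrightarrow> \<bar>z - x\<bar> \<le> int n"
  by (induction n arbitrary: x l) (auto, fastforce+)

lemma nn_paths_interval: "l \<in> nn_paths n x \<Longrightarrow> a \<in> set l \<Longrightarrow> b \<in> set l \<Longrightarrow> {a..b} \<subseteq> set l"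
proof (induction n arbitrary: x l a b)
  case (Suc n)
  then obtain y l' where l: "l = x # l'" "l' \<in> nn_paths n y" "\<bar>x - y\<bar> = 1"
    by auto
  have y: "y \<in> set l'"
    using l(2) by (rule start_in_nn_paths)
  have "z \<in> set l'" if z: "z \<in> {a..b}" "z \<noteq> x" for z
  proof -
    define a' where "a' = (if a = x then y else a)"
    define b' where "b' = (if b = x then y else b)"
    have "a' \<in> set l'" "b' \<in> set l'"
      using Suc.prems(2,3) y by (auto simp: l(1) a'_def b'_def)
    moreover have "z \<in> {a'..b'}"
      using z l(3) by (auto simp: a'_def b'_def)
    ultimately show ?thesis
      using Suc.IH[OF l(2)] by blast
  qed
  then show ?case
    unfolding l(1) list.set by blast
qed simp

lemma path_exp_cong:
  "(\<And>l. l \<in> nn_paths n x \<Longrightarrow> f l = g l) \<Longrightarrow> path_exp \<pi> n x f = path_exp \<pi> n x g"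
proof (induction n arbitrary: x f g)
  case (Suc n)
  have "path_exp \<pi> n y (\<lambda>l. f (x # l)) = path_exp \<pi> n y (\<lambda>l. g (x # l))"
    if "y \<in> {x + 1, x - 1}" for y
    using that by (intro Suc.IH Suc.prems) auto
  then show ?case
    by (simp add: mean_step_def)
qed simp

lemma path_exp_mono:
  assumes "\<And>y. \<pi> y \<in> {0..1}" and "\<And>l. l \<in> nn_paths n x \<Longrightarrow> f l \<le> g l"
  shows "path_exp \<pi> n x f \<le> path_exp \<pi> n x g"
  using assms(2)
proof (induction n arbitrary: x f g)
  case (Suc n)
  have "path_exp \<pi> n y (\<lambda>l. f (x # l)) \<le> path_exp \<pi> n y (\<lambda>l. g (x # l))"
    if "y \<in> {x + 1, x - 1}" for y
    using that by (intro Suc.IH Suc.prems) auto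
  then show ?case
    using assms(1) by (simp add: mean_step_mono)
qed simp

lemma path_exp_add: "path_exp \<pi> n x (\<lambda>l. f l + g l) = path_exp \<pi> n x f + path_exp \<pi> n x g"
  by (induction n arbitrary: x f g) (auto simp: mean_step_def algebra_simps)

lemma path_exp_cmult: "path_exp \<pi> n x (\<lambda>l. c * f l) = c * path_exp \<pi> n x f"
  by (induction n arbitrary: x f) (auto simp: mean_step_def algebra_simps)

lemma path_exp_diff: "path_exp \<pi> n x (\<lambda>l. f l - g l) = path_exp \<pi> n x f - path_exp \<pi> n x g"
  using path_exp_add[of \<pi> n x f "\<lambda>l. - g l"] path_exp_cmult[of \<pi> n x "-1" g] by simp

lemma path_exp_const [simp]: "path_exp \<pi> n x (\<lambda>_. c) = c"
  by (induction n arbitrary: x) auto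

lemma path_exp_sum:
  "finite A \<Longrightarrow> path_exp \<pi> n x (\<lambda>l. \<Sum>i\<in>A. f i l) = (\<Sum>i\<in>A. path_exp \<pi> n x (f i))"
  by (induction A rule: finite_induct) (auto simp: path_exp_add)

lemma path_exp_Suc_last:
  "path_exp \<pi> (Suc n) x f = path_exp \<pi> n x (\<lambda>l. mean_step \<pi> (\<lambda>y. f (l @ [y])) (last l))"
proof (induction n arbitrary: x f)
  case (Suc n)
  let ?g = "\<lambda>l. mean_step \<pi> (\<lambda>y. f (l @ [y])) (last l)"
  have "path_exp \<pi> n y (\<lambda>l. mean_step \<pi> (\<lambda>z. f (x # l @ [z])) (last l))
      = path_exp \<pi> n y (\<lambda>l. ?g (x # l))" for y
  proof (rule path_exp_cong)
    fix l assume "l \<in> nn_paths n y"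
    then have "l \<noteq> []"
      by (rule nn_paths_not_Nil)
    then show "mean_step \<pi> (\<lambda>z. f (x # l @ [z])) (last l) = ?g (x # l)"
      by simp
  qed
  then have "mean_step \<pi> (\<lambda>y. path_exp \<pi> (Suc n) y (\<lambda>l. f (x # l))) x
      = mean_step \<pi> (\<lambda>y. path_exp \<pi> n y (\<lambda>l. ?g (x # l))) x"
    by (simp only: Suc.IH append_Cons)
  then show ?case
    by (simp only: path_exp.simps(2)[of \<pi> "Suc n"] path_exp.simps(2)[of \<pi> n])
qed (simp add: mean_step_def)

lemma path_exp_reflect:
  assumes "\<And>y. \<pi> (- y) = 1 - \<pi> y"
  shows "path_exp \<pi> n (- x) f = path_exp \<pi> n x (\<lambda>l. f (map uminus l))"
proof (induction n arbitrary: x f)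
  case (Suc n)
  have "path_exp \<pi> n (- x + 1) (\<lambda>l. f (- x # l)) = path_exp \<pi> n (x - 1) (\<lambda>l. f (map uminus (x # l)))"
    "path_exp \<pi> n (- x - 1) (\<lambda>l. f (- x # l)) = path_exp \<pi> n (x + 1) (\<lambda>l. f (map uminus (x # l)))"
    using Suc.IH[of "x - 1" "\<lambda>l. f (- x # l)"] Suc.IH[of "x + 1" "\<lambda>l. f (- x # l)"] by simp_all
  then show ?case
    by (simp add: mean_step_def assms algebra_simps)
qed simp

section \<open>Chains killed on leaving a set\<close>

definition killed_step :: "(int \<Rightarrow> real) \<Rightarrow> int set \<Rightarrow> (int \<Rightarrow> real) \<Rightarrow> int \<Rightarrow> real" where
  "killed_step \<pi> I g = mean_step \<pi> (\<lambda>y. if y \<in> I then g y else 0)"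

definition killed_exp :: "(int \<Rightarrow> real) \<Rightarrow> int set \<Rightarrow> nat \<Rightarrow> int \<Rightarrow> (int \<Rightarrow> real) \<Rightarrow> real" where
  "killed_exp \<pi> I n x g = path_exp \<pi> n x (\<lambda>l. if set l \<subseteq> I then g (last l) else 0)"

lemma killed_step_eq_mean_step:
  assumes "x + 1 \<notin> I \<Longrightarrow> g (x + 1) = 0" and "x - 1 \<notin> I \<Longrightarrow> g (x - 1) = 0"
  shows "killed_step \<pi> I g x = mean_step \<pi> g x"
  using assms by (auto simp: killed_step_def mean_step_def)

lemma killed_step_le_mean_step:
  assumes "\<pi> x \<in> {0..1}" "x + 1 \<notin> I \<Longrightarrow> 0 \<le> g (x + 1)" and "x - 1 \<notin> I \<Longrightarrow> 0 \<le> g (x - 1)"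
  shows "killed_step \<pi> I g x \<le> mean_step \<pi> g x"
  unfolding killed_step_def using assms by (intro mean_step_mono) auto

lemma killed_exp_Suc: "killed_exp \<pi> I (Suc n) x g = killed_exp \<pi> I n x (killed_step \<pi> I g)"
proof -
  have "mean_step \<pi> (\<lambda>y. if set (l @ [y]) \<subseteq> I then g (last (l @ [y])) else 0) (last l)
      = (if set l \<subseteq> I then killed_step \<pi> I g (last l) else 0)" for l
    by (simp add: killed_step_def cong: if_cong)
  then show ?thesis
    unfolding killed_exp_def by (simp only: path_exp_Suc_last)
qed

lemma killed_exp_diff:
  "killed_exp \<pi> I n x (\<lambda>y. f y - g y) = killed_exp \<pi> I n x f - killed_exp \<pi> I n x g"
  unfolding killed_exp_def path_exp_diff[symmetric] by (rule arg_cong[where f = "path_exp \<pi> n x"]) auto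

lemma killed_exp_cmult: "killed_exp \<pi> I n x (\<lambda>y. c * f y) = c * killed_exp \<pi> I n x f"
  unfolding killed_exp_def path_exp_cmult[symmetric] by (rule arg_cong[where f = "path_exp \<pi> n x"]) auto

lemma killed_exp_telescope:
  assumes "x \<in> I"
  shows "(\<Sum>k<N. killed_exp \<pi> I k x (\<lambda>y. g y - killed_step \<pi> I g y)) = g x - killed_exp \<pi> I N x g"
proof (induction N)
  case (Suc N)
  have "killed_exp \<pi> I N x (\<lambda>y. g y - killed_step \<pi> I g y) = killed_exp \<pi> I N x g - killed_exp \<pi> I (Suc N) x g"
    by (simp only: killed_exp_diff killed_exp_Suc)
  with Suc.IH show ?case
    by simp
qed (simp add: assms killed_exp_def)

lemma killed_exp_mono:
  assumes "\<And>y. \<pi> y \<in> {0..1}" and "\<And>y. y \<in> I \<Longrightarrow> f y \<le> g y"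
  shows "killed_exp \<pi> I n x f \<le> killed_exp \<pi> I n x g"
  unfolding killed_exp_def using assms(2) by (intro path_exp_mono[OF assms(1)]) (auto dest: last_in_nn_paths)

lemma killed_exp_nonneg:
  assumes "\<And>y. \<pi> y \<in> {0..1}" and "\<And>y. y \<in> I \<Longrightarrow> 0 \<le> f y"
  shows "0 \<le> killed_exp \<pi> I n x f"
  using killed_exp_mono[OF assms(1), of I "\<lambda>_. 0" f] assms(2) by (simp add: killed_exp_def)

lemma killed_exp_subset_mono:
  assumes "\<And>y. \<pi> y \<in> {0..1}" "I \<subseteq> J" and "\<And>y. y \<in> J \<Longrightarrow> 0 \<le> f y"
  shows "killed_exp \<pi> I n x f \<le> killed_exp \<pi> J n x f"
  unfolding killed_exp_def using assms(2,3)
  by (intro path_exp_mono[OF assms(1)]) (auto dest: last_in_nn_paths)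

lemma killed_exp_reflect:
  assumes "\<And>y. \<pi> (- y) = 1 - \<pi> y"
  shows "killed_exp \<pi> (uminus ` I) n (- x) (\<lambda>y. f (- y)) = killed_exp \<pi> I n x f"
  unfolding killed_exp_def path_exp_reflect[where \<pi> = \<pi>, OF assms]
proof (rule path_exp_cong)
  fix l assume "l \<in> nn_paths n x"
  then have "l \<noteq> []"
    by (rule nn_paths_not_Nil)
  moreover have "set (map uminus l) \<subseteq> uminus ` I \<longleftrightarrow> set l \<subseteq> I"
    by (auto simp: image_subset_iff)
  ultimately show "(if set (map uminus l) \<subseteq> uminus ` I then f (- last (map uminus l)) else 0)
      = (if set l \<subseteq> I then f (last l) else 0)"
    by (simp add: last_map)
qed

lemma decseq_survival:
  assumes "\<And>y. \<pi> y \<in> {0..1}"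
  shows "decseq (\<lambda>n. killed_exp \<pi> I n x (\<lambda>_. 1))"
proof (rule decseq_SucI)
  fix n
  have "killed_step \<pi> I (\<lambda>_. 1) y \<le> 1" for y
    using mean_step_mono[of \<pi> y "\<lambda>z. if z \<in> I then 1 else 0" "\<lambda>_. 1"] assms
    by (simp add: killed_step_def)
  then show "killed_exp \<pi> I (Suc n) x (\<lambda>_. 1) \<le> killed_exp \<pi> I n x (\<lambda>_. 1)"
    unfolding killed_exp_Suc by (intro killed_exp_mono assms)
qed

lemma green_le_of_superharmonic:
  assumes "\<And>y. \<pi> y \<in> {0..1}" "x \<in> I"
    and "\<And>y. y \<in> I \<Longrightarrow> 0 \<le> g y" "\<And>y. y \<in> I \<Longrightarrow> f y \<le> g y - killed_step \<pi> I g y"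
  shows "(\<Sum>k<N. killed_exp \<pi> I k x f) \<le> g x"
proof -
  have "(\<Sum>k<N. killed_exp \<pi> I k x f) \<le> (\<Sum>k<N. killed_exp \<pi> I k x (\<lambda>y. g y - killed_step \<pi> I g y))"
    by (intro sum_mono killed_exp_mono assms)
  also have "\<dots> = g x - killed_exp \<pi> I N x g"
    by (rule killed_exp_telescope[OF assms(2)])
  also have "\<dots> \<le> g x"
    using killed_exp_nonneg[OF assms(1,3)] by simp
  finally show ?thesis .
qed

lemma green_ge_of_subharmonic:
  assumes "\<And>y. \<pi> y \<in> {0..1}" "x \<in> I"
    and "\<And>y. y \<in> I \<Longrightarrow> g y \<le> c" "\<And>y. y \<in> I \<Longrightarrow> g y - killed_step \<pi> I g y \<le> f y"
  shows "g x - c * killed_exp \<pi> I N x (\<lambda>_. 1) \<le> (\<Sum>k<N. killed_exp \<pi> I k x f)"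
proof -
  have "killed_exp \<pi> I N x g \<le> killed_exp \<pi> I N x (\<lambda>_. c * 1)"
    using assms(3) by (intro killed_exp_mono assms(1)) simp
  then have "g x - c * killed_exp \<pi> I N x (\<lambda>_. 1) \<le> g x - killed_exp \<pi> I N x g"
    by (simp only: killed_exp_cmult)
  also have "\<dots> = (\<Sum>k<N. killed_exp \<pi> I k x (\<lambda>y. g y - killed_step \<pi> I g y))"
    by (rule killed_exp_telescope[OF assms(2), symmetric])
  also have "\<dots> \<le> (\<Sum>k<N. killed_exp \<pi> I k x f)"
    by (intro sum_mono killed_exp_mono assms)
  finally show ?thesis .
qed

lemma survival_tendsto_zero:
  assumes "\<And>y. \<pi> y \<in> {0..1}" "x \<in> I" "0 < \<epsilon>"
    and "\<And>y. y \<in> I \<Longrightarrow> 0 \<le> h y" "\<And>y. y \<in> I \<Longrightarrow> \<epsilon> \<le> h y - killed_step \<pi> I h y"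
  shows "(\<lambda>N. killed_exp \<pi> I N x (\<lambda>_. 1)) \<longlonglongrightarrow> 0"
proof (rule tendsto_sandwich)
  have "real N * \<epsilon> * killed_exp \<pi> I N x (\<lambda>_. 1) \<le> h x" for N
  proof -
    have "real N * \<epsilon> * killed_exp \<pi> I N x (\<lambda>_. 1) = (\<Sum>k<N. \<epsilon> * killed_exp \<pi> I N x (\<lambda>_. 1))"
      by simp
    also have "\<dots> \<le> (\<Sum>k<N. \<epsilon> * killed_exp \<pi> I k x (\<lambda>_. 1))"
      using decseq_survival[OF assms(1)] assms(3)
      by (intro sum_mono mult_left_mono) (auto simp: decseq_def)
    also have "\<dots> = (\<Sum>k<N. killed_exp \<pi> I k x (\<lambda>_. \<epsilon> * 1))"
      by (simp only: killed_exp_cmult)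
    also have "\<dots> \<le> h x"
      using assms by (intro green_le_of_superharmonic) auto
    finally show ?thesis .
  qed
  then have "killed_exp \<pi> I N x (\<lambda>_. 1) \<le> h x / \<epsilon> / real N" if "0 < N" for N
    using that assms(3) by (simp add: field_simps)
  then show "eventually (\<lambda>N. killed_exp \<pi> I N x (\<lambda>_. 1) \<le> h x / \<epsilon> / real N) sequentially"
    by (auto simp: eventually_sequentially intro: exI[of _ 1])
  show "eventually (\<lambda>N. 0 \<le> killed_exp \<pi> I N x (\<lambda>_. 1)) sequentially"
    by (intro always_eventually allI killed_exp_nonneg assms(1)) simp
  show "(\<lambda>N. h x / \<epsilon> / real N) \<longlonglongrightarrow> 0"
    by (rule lim_const_over_n)
qed simp

section \<open>The base chain of the stationary walk\<close>

definition up_prob :: "real \<Rightarrow> int \<Rightarrow> real" where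
  "up_prob p x = (if x < 0 then p else if x = 0 then 1/2 else 1 - p)"

definition odds :: "real \<Rightarrow> real" where
  "odds p = p / (1 - p)"

lemma up_prob_range: "p \<in> {0..1} \<Longrightarrow> up_prob p x \<in> {0..1}"
  by (simp add: up_prob_def)

lemma up_prob_uminus: "up_prob p (- x) = 1 - up_prob p x"
  by (simp add: up_prob_def)

lemma odds_gt_1: "1/2 < p \<Longrightarrow> p < 1 \<Longrightarrow> 1 < odds p"
  by (simp add: odds_def)

lemma le_odds_iff: "0 \<le> m \<Longrightarrow> p < 1 \<Longrightarrow> m / (m + 1) \<le> p \<longleftrightarrow> m \<le> odds p"
  by (simp add: odds_def field_simps)

lemma odds_power_harmonic:
  assumes "p \<noteq> 1"
  shows "(1 - p) * odds p ^ Suc (Suc k) + p * odds p ^ k = odds p ^ Suc k"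
proof -
  have p: "1 - p \<noteq> 0"
    using assms by simp
  have o: "(1 - p) * odds p = p"
    using p by (simp add: odds_def)
  have "(1 - p) * odds p ^ 2 + p = ((1 - p) * odds p) * odds p + p"
    by (simp add: power2_eq_square)
  also have "\<dots> = p * (odds p + 1)"
    unfolding o by (simp add: algebra_simps)
  also have "\<dots> = odds p"
    using p by (simp add: odds_def field_simps)
  finally have "odds p ^ k * ((1 - p) * odds p ^ 2 + p) = odds p ^ Suc k"
    by simp
  then show ?thesis
    by (simp add: algebra_simps power2_eq_square)
qed

lemma mean_step_odds_power_left:
  assumes "p \<noteq> 1"
  shows "mean_step (up_prob p) (\<lambda>y. odds p ^ nat (- y)) x
    = (if x = 0 then (1 + odds p) / 2 else odds p ^ nat (- x))"
proof (cases x "0::int" rule: linorder_cases)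
  case less
  then obtain k where "x = - int (Suc k)"
    using negD by blast
  then show ?thesis
    using odds_power_harmonic[OF assms, of k] by (simp add: mean_step_def up_prob_def nat_add_distrib)
next
  case greater
  then show ?thesis
    by (simp add: mean_step_def up_prob_def)
qed (simp add: mean_step_def up_prob_def)

lemma mean_step_odds_power_abs:
  assumes "p \<noteq> 1"
  shows "mean_step (up_prob p) (\<lambda>y. odds p ^ nat \<bar>y\<bar>) x
    = (if x = 0 then odds p else odds p ^ nat \<bar>x\<bar>)"
proof (cases x "0::int" rule: linorder_cases)
  case less
  then obtain k where "x = - int (Suc k)"
    using negD by blast
  then show ?thesis
    using odds_power_harmonic[OF assms, of k] by (simp add: mean_step_def up_prob_def nat_add_distrib)
next
  case greater
  then obtain k where "x = int (Suc k)"
    by (metis Suc_pred' pos_int_cases)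
  then show ?thesis
    using odds_power_harmonic[OF assms, of k] by (simp add: mean_step_def up_prob_def nat_add_distrib algebra_simps)
qed (simp add: mean_step_def up_prob_def)

lemma mean_step_abs:
  "mean_step (up_prob p) (\<lambda>y. \<bar>real_of_int y\<bar>) x = (if x = 0 then 1 else \<bar>x\<bar> - (2 * p - 1))"
  by (simp add: mean_step_def up_prob_def algebra_simps)

lemma green_left_le:
  assumes "1/2 < p" "p < 1"
  shows "(\<Sum>k<N. killed_exp (up_prob p) {- int a..} k 0 (indicator {0}))
    \<le> 2 * odds p ^ Suc a / (odds p - 1)"
proof -
  define r where "r = odds p"
  have r: "1 < r"
    using odds_gt_1[OF assms] by (simp add: r_def)
  have \<pi>: "\<And>y. up_prob p y \<in> {0..1}"
    using assms by (intro up_prob_range) auto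
  \<comment> \<open>harmonic away from the origin, zero at \<open>-a-1\<close>, with defect \<open>1\<close> at the origin\<close>
  define g where "g y = 2 / (r - 1) * (r ^ Suc a - r ^ nat (- y))" for y
  have g_nonneg: "0 \<le> g y" if "y \<in> {- int a..}" for y
  proof -
    have "r ^ nat (- y) \<le> r ^ Suc a"
      using that r by (intro power_increasing) auto
    then show ?thesis
      using r by (simp add: g_def)
  qed
  have "g y - killed_step (up_prob p) {- int a..} g y = indicator {0} y" if "y \<in> {- int a..}" for y
  proof -
    have "killed_step (up_prob p) {- int a..} g y = mean_step (up_prob p) g y"
      using that by (intro killed_step_eq_mean_step) (auto simp: g_def nat_add_distrib)
    also have "\<dots> = 2 / (r - 1) * (r ^ Suc a - mean_step (up_prob p) (\<lambda>y. r ^ nat (- y)) y)"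
      unfolding g_def by (rule mean_step_affine)
    finally have "killed_step (up_prob p) {- int a..} g y
        = 2 / (r - 1) * (r ^ Suc a - (if y = 0 then (1 + r) / 2 else r ^ nat (- y)))"
      using assms by (simp add: mean_step_odds_power_left r_def)
    then show ?thesis
      using r by (cases "y = 0") (simp_all add: g_def field_simps)
  qed
  then have "(\<Sum>k<N. killed_exp (up_prob p) {- int a..} k 0 (indicator {0})) \<le> g 0"
    by (intro green_le_of_superharmonic \<pi> g_nonneg) auto
  also have "g 0 \<le> 2 * r ^ Suc a / (r - 1)"
    using r by (simp add: g_def field_simps)
  finally show ?thesis
    by (simp add: r_def)
qed

lemma green_interval_le:
  assumes "1/2 < p" "p < 1"
  shows "(\<Sum>k<N. killed_exp (up_prob p) {- int a..int b} k 0 (indicator {0}))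
    \<le> 2 * min (odds p ^ Suc a) (odds p ^ Suc b) / (odds p - 1)"
proof -
  let ?G = "\<lambda>I. \<Sum>k<N. killed_exp (up_prob p) I k 0 (indicator {0})"
  have \<pi>: "\<And>y. up_prob p y \<in> {0..1}"
    using assms by (intro up_prob_range) auto
  have mono: "?G I \<le> ?G J" if "I \<subseteq> J" for I J
    using that by (intro sum_mono killed_exp_subset_mono \<pi>) auto
  have "killed_exp (up_prob p) {..int b} k 0 (indicator {0})
      = killed_exp (up_prob p) {- int b..} k 0 (indicator {0})" for k
  proof -
    have "(\<lambda>y::int. indicator {0} (- y) :: real) = indicator {0}"
      by (simp add: fun_eq_iff indicator_def)
    then show ?thesis
      using killed_exp_reflect[of "up_prob p" "{- int b..}" k 0 "indicator {0}"]
      by (simp add: up_prob_uminus)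
  qed
  then have "?G {..int b} = ?G {- int b..}"
    by simp
  then have "?G {- int a..int b} \<le> 2 * odds p ^ Suc b / (odds p - 1)"
    using mono[of "{- int a..int b}" "{..int b}"] green_left_le[OF assms, where N = N and a = b] by auto
  moreover have "?G {- int a..int b} \<le> 2 * odds p ^ Suc a / (odds p - 1)"
    using mono[of "{- int a..int b}" "{- int a..}"] green_left_le[OF assms, where N = N and a = a] by auto
  ultimately show ?thesis
    by (simp add: min_def)
qed

lemma min_le_sqrt_mult:
  fixes u v :: real
  assumes "0 \<le> u" "0 \<le> v"
  shows "min u v \<le> sqrt (u * v)"
proof -
  have "(min u v)\<^sup>2 \<le> u * v"
    using assms by (auto simp: min_def power2_eq_square intro: mult_mono)
  then show ?thesis
    using assms by (metis real_le_rsqrt)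
qed

lemma green_interval_le_sqrt:
  assumes "1/2 < p" "p < 1"
  shows "(\<Sum>k<N. killed_exp (up_prob p) {- int a..int b} k 0 (indicator {0}))
    \<le> 2 * odds p / (odds p - 1) * sqrt (odds p) ^ (a + b)"
proof -
  define r where "r = odds p"
  have r: "1 < r"
    using odds_gt_1[OF assms] by (simp add: r_def)
  have "min (r ^ a) (r ^ b) \<le> sqrt (r ^ a * r ^ b)"
    using r by (intro min_le_sqrt_mult) auto
  also have "\<dots> = sqrt r ^ (a + b)"
    by (simp add: real_sqrt_mult real_sqrt_power power_add)
  finally have min_le: "min (r ^ a) (r ^ b) \<le> sqrt r ^ (a + b)" .
  have "min (r ^ Suc a) (r ^ Suc b) = r * min (r ^ a) (r ^ b)"
    using r by (simp add: min_mult_distrib_left)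
  then have "(\<Sum>k<N. killed_exp (up_prob p) {- int a..int b} k 0 (indicator {0}))
      \<le> 2 * (r * min (r ^ a) (r ^ b)) / (r - 1)"
    using green_interval_le[OF assms, where N = N and a = a and b = b] by (simp add: r_def)
  also have "\<dots> \<le> 2 * (r * sqrt r ^ (a + b)) / (r - 1)"
    using min_le r by (intro divide_right_mono mult_left_mono) auto
  finally show ?thesis
    by (simp add: r_def)
qed

text \<open>The expected number of visits to the origin before leaving \<open>[-s, s]\<close> for the
  chain started at \<open>y\<close> (a gambler's ruin computation).\<close>
definition interval_green :: "real \<Rightarrow> nat \<Rightarrow> int \<Rightarrow> real" where
  "interval_green p s y = 1 / (odds p - 1) * (odds p ^ Suc s - odds p ^ nat \<bar>y\<bar>)"

lemma interval_green_bounds: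
  assumes "1/2 < p" "p < 1" "y \<in> {- int s..int s}"
  shows "0 \<le> interval_green p s y" "interval_green p s y \<le> interval_green p s 0"
proof -
  have "odds p ^ nat \<bar>y\<bar> \<le> odds p ^ Suc s"
    using assms odds_gt_1[OF assms(1,2)] by (intro power_increasing) auto
  then show "0 \<le> interval_green p s y" "interval_green p s y \<le> interval_green p s 0"
    using odds_gt_1[OF assms(1,2)] by (auto simp: interval_green_def divide_right_mono)
qed

lemma interval_green_0_ge: "1/2 < p \<Longrightarrow> p < 1 \<Longrightarrow> odds p ^ s \<le> interval_green p s 0"
  using odds_gt_1[of p] by (simp add: interval_green_def field_simps)

lemma interval_green_boundary:
  assumes "y \<notin> {- int s..int s}" "x \<in> {- int s..int s}" "y \<in> {x - 1, x + 1}"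
  shows "interval_green p s y = 0 \<and> \<bar>y\<bar> = int s + 1"
proof -
  have "\<bar>y\<bar> = int s + 1"
    using assms by auto
  then show ?thesis
    by (simp add: interval_green_def nat_add_distrib)
qed

lemma mean_step_interval_green:
  assumes "1/2 < p" "p < 1"
  shows "mean_step (up_prob p) (interval_green p s) y = interval_green p s y - indicator {0} y"
proof -
  have "mean_step (up_prob p) (interval_green p s) y
      = 1 / (odds p - 1) * (odds p ^ Suc s - mean_step (up_prob p) (\<lambda>y. odds p ^ nat \<bar>y\<bar>) y)"
    unfolding interval_green_def by (rule mean_step_affine)
  then show ?thesis
    using assms odds_gt_1[OF assms]
    by (cases "y = 0") (simp_all add: interval_green_def mean_step_odds_power_abs field_simps)
qed

lemma killed_step_interval_green:
  assumes "1/2 < p" "p < 1" "y \<in> {- int s..int s}"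
  shows "killed_step (up_prob p) {- int s..int s} (interval_green p s) y = interval_green p s y - indicator {0} y"
proof -
  have "killed_step (up_prob p) {- int s..int s} (interval_green p s) y = mean_step (up_prob p) (interval_green p s) y"
    using interval_green_boundary[where p = p and s = s and x = y, OF _ assms(3)]
    by (intro killed_step_eq_mean_step) auto
  then show ?thesis
    by (simp add: mean_step_interval_green[OF assms(1,2)])
qed

lemma survival_symmetric_tendsto_zero:
  assumes "1/2 < p" "p < 1"
  shows "(\<lambda>N. killed_exp (up_prob p) {- int s..int s} N 0 (\<lambda>_. 1)) \<longlonglongrightarrow> 0"
proof -
  let ?I = "{- int s..int s}"
  have \<pi>: "\<And>y. up_prob p y \<in> {0..1}"
    using assms by (intro up_prob_range) auto
  \<comment> \<open>\<open>\<bar>y\<bar>\<close> drifts down by \<open>2p - 1\<close> away from the origin; the Green function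
    makes up for its increase at the origin\<close>
  define h where "h y = \<bar>real_of_int y\<bar> + 2 * interval_green p s y" for y
  have "2 * p - 1 \<le> h y - killed_step (up_prob p) ?I h y" if "y \<in> ?I" for y
  proof -
    have "killed_step (up_prob p) ?I h y \<le> mean_step (up_prob p) h y"
      using interval_green_boundary[where p = p and s = s and x = y, OF _ that] \<pi>
      by (intro killed_step_le_mean_step) (auto simp: h_def)
    also have "\<dots> = mean_step (up_prob p) (\<lambda>y. \<bar>real_of_int y\<bar>) y + 2 * mean_step (up_prob p) (interval_green p s) y"
      unfolding h_def by (simp only: mean_step_add mean_step_cmult)
    also have "\<dots> = h y - (if y = 0 then 1 else 2 * p - 1)"
      by (simp add: h_def mean_step_interval_green[OF assms] mean_step_abs)
    finally show ?thesis
      using assms by (auto split: if_splits)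
  qed
  then show ?thesis
    using assms interval_green_bounds(1)[OF assms]
    by (intro survival_tendsto_zero[OF \<pi>, where h = h and \<epsilon> = "2 * p - 1"]) (auto simp: h_def)
qed

lemma eventually_green_symmetric_ge:
  assumes "1/2 < p" "p < 1"
  shows "eventually (\<lambda>N. odds p ^ s / 2
    \<le> (\<Sum>k<N. killed_exp (up_prob p) {- int s..int s} k 0 (indicator {0}))) sequentially"
proof -
  have \<pi>: "\<And>y. up_prob p y \<in> {0..1}"
    using assms by (intro up_prob_range) auto
  have "eventually (\<lambda>N. killed_exp (up_prob p) {- int s..int s} N 0 (\<lambda>_. 1) < 1/2) sequentially"
    by (rule order_tendstoD(2)[OF survival_symmetric_tendsto_zero[OF assms, where s = s]]) simp
  then show ?thesis
  proof (rule eventually_mono)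
    let ?I = "{- int s..int s}" and ?g = "interval_green p s"
    fix N assume survival: "killed_exp (up_prob p) ?I N 0 (\<lambda>_. 1) < 1/2"
    have "?g 0 - ?g 0 * killed_exp (up_prob p) ?I N 0 (\<lambda>_. 1) \<le> (\<Sum>k<N. killed_exp (up_prob p) ?I k 0 (indicator {0}))"
      using assms interval_green_bounds(2)[OF assms] killed_step_interval_green[OF assms]
      by (intro green_ge_of_subharmonic[OF \<pi>]) auto
    moreover have "?g 0 * killed_exp (up_prob p) ?I N 0 (\<lambda>_. 1) \<le> ?g 0 * (1/2)"
      using survival interval_green_bounds(1)[OF assms, of 0] by (intro mult_left_mono) auto
    ultimately show "odds p ^ s / 2 \<le> (\<Sum>k<N. killed_exp (up_prob p) ?I k 0 (indicator {0}))"
      using interval_green_0_ge[OF assms, of s] by linarith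
  qed
qed

section \<open>Return probabilities of the lamplighter walk\<close>

text \<open>The sites whose lamps have been redrawn along the path \<open>l\<close>: none before the first
  step, all visited sites afterwards.\<close>
definition touched :: "int list \<Rightarrow> int set" where
  "touched l = (if tl l = [] then {} else set l)"

text \<open>With \<open>q = 1 / |F|\<close>, \<open>return_exp p q n (Z, x)\<close> is the probability that the
  lamplighter walk started at \<open>x\<close> with lit lamps \<open>Z\<close> is at the identity at time \<open>n\<close>:
  the lamps at touched sites end up uniform and independent, the others keep their state.\<close>
definition return_exp :: "real \<Rightarrow> real \<Rightarrow> nat \<Rightarrow> int set \<times> int \<Rightarrow> real" where
  "return_exp p q n = (\<lambda>(Z, x). path_exp (up_prob p) n x
     (\<lambda>l. if last l = 0 \<and> Z \<subseteq> touched l then q ^ card (touched l) else 0))"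

lemma return_exp_nonneg: "p \<in> {0..1} \<Longrightarrow> 0 \<le> q \<Longrightarrow> 0 \<le> return_exp p q n s"
  unfolding return_exp_def
  using path_exp_mono[of "up_prob p" n _ "\<lambda>_. 0"] up_prob_range by (auto split: prod.split)

lemma card_nn_paths_ge:
  assumes "l \<in> nn_paths n x"
  shows "nat (Max (set l) - Min (set l)) + 1 \<le> card (set l)"
proof -
  have ne: "set l \<noteq> {}"
    using nn_paths_not_Nil[OF assms] by simp
  then have "{Min (set l)..Max (set l)} \<subseteq> set l"
    using nn_paths_interval[OF assms] by simp
  then have "card {Min (set l)..Max (set l)} \<le> card (set l)"
    by (intro card_mono) auto
  moreover have "Min (set l) \<le> Max (set l)"
    using ne by simp
  ultimately show ?thesis
    by simp
qed

lemma power_card_le_interval_sum: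
  fixes q :: real
  assumes q: "0 \<le> q" "q \<le> 1" and l: "l \<in> nn_paths n 0" and "n < N"
  shows "q ^ card (set l) \<le> (\<Sum>a<N. \<Sum>b<N. q ^ (a + b + 1) * (if set l \<subseteq> {- int a..int b} then 1 else 0))"
proof -
  have zero: "0 \<in> set l"
    using l by (rule start_in_nn_paths)
  define a where "a = nat (- Min (set l))"
  define b where "b = nat (Max (set l))"
  have "Min (set l) \<in> set l" "Max (set l) \<in> set l"
    using zero by (auto intro: Min_in Max_in)
  then have bounds: "\<bar>Min (set l)\<bar> \<le> int n" "\<bar>Max (set l)\<bar> \<le> int n"
    using nn_paths_dist[OF l] by fastforce+
  have sign: "Min (set l) \<le> 0" "0 \<le> Max (set l)"
    using zero by simp_all
  have ab: "a < N" "b < N"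
    using bounds sign \<open>n < N\<close> by (auto simp: a_def b_def)
  have sub: "set l \<subseteq> {- int a..int b}"
    using sign by (auto simp: a_def b_def)
  have "a + b + 1 \<le> card (set l)"
    using card_nn_paths_ge[OF l] sign by (simp add: a_def b_def nat_add_distrib[symmetric])
  then have "q ^ card (set l) \<le> q ^ (a + b + 1) * (if set l \<subseteq> {- int a..int b} then 1 else 0)"
    using sub q by (simp del: power_Suc add: power_decreasing)
  also have "\<dots> \<le> (\<Sum>b'<N. q ^ (a + b' + 1) * (if set l \<subseteq> {- int a..int b'} then 1 else 0))"
    using ab q by (intro member_le_sum[where f = "\<lambda>b'. q ^ (a + b' + 1) * _ b'"]) auto
  also have "\<dots> \<le> (\<Sum>a'<N. \<Sum>b'<N. q ^ (a' + b' + 1) * (if set l \<subseteq> {- int a'..int b'} then 1 else 0))"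
    using ab q by (intro member_le_sum[where f = "\<lambda>a'. \<Sum>b'<N. _ a' b'"] sum_nonneg) auto
  finally show ?thesis .
qed

lemma return_exp_origin:
  "return_exp p q n ({}, 0) = path_exp (up_prob p) n 0 (\<lambda>l. if last l = 0 then q ^ card (touched l) else 0)"
  by (simp add: return_exp_def)

lemma return_exp_origin_le:
  assumes q: "0 \<le> q" "q \<le> 1" and p: "p \<in> {0..1}" and n: "0 < n" "n < N"
  shows "return_exp p q n ({}, 0)
    \<le> (\<Sum>a<N. \<Sum>b<N. q ^ (a + b + 1) * killed_exp (up_prob p) {- int a..int b} n 0 (indicator {0}))"
proof -
  have "return_exp p q n ({}, 0) \<le> path_exp (up_prob p) n 0 (\<lambda>l. \<Sum>a<N. \<Sum>b<N.
      q ^ (a + b + 1) * (if set l \<subseteq> {- int a..int b} then indicator {0} (last l) else 0))"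
    unfolding return_exp_origin
  proof (rule path_exp_mono[OF up_prob_range[OF p]])
    fix l assume l: "l \<in> nn_paths n 0"
    have "tl l \<noteq> []"
      using length_nn_paths[OF l] n by (cases l) auto
    then have "touched l = set l"
      by (simp add: touched_def)
    then show "(if last l = 0 then q ^ card (touched l) else 0)
        \<le> (\<Sum>a<N. \<Sum>b<N. q ^ (a + b + 1) * (if set l \<subseteq> {- int a..int b} then indicator {0} (last l) else 0))"
      using power_card_le_interval_sum[OF q l n(2)] q
      by (cases "last l = 0") (simp_all add: sum_nonneg cong: if_cong)
  qed
  also have "\<dots> = (\<Sum>a<N. \<Sum>b<N. q ^ (a + b + 1) * killed_exp (up_prob p) {- int a..int b} n 0 (indicator {0}))"
    by (simp add: path_exp_sum path_exp_cmult killed_exp_def)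
  finally show ?thesis .
qed

lemma sum_swap3:
  "(\<Sum>i\<in>A. \<Sum>j\<in>B. \<Sum>k\<in>C. f i j k) = (\<Sum>j\<in>B. \<Sum>k\<in>C. \<Sum>i\<in>A. f i j k)"
proof -
  have "(\<Sum>i\<in>A. \<Sum>j\<in>B. \<Sum>k\<in>C. f i j k) = (\<Sum>j\<in>B. \<Sum>i\<in>A. \<Sum>k\<in>C. f i j k)"
    by (rule sum.swap)
  also have "\<dots> = (\<Sum>j\<in>B. \<Sum>k\<in>C. \<Sum>i\<in>A. f i j k)"
    by (intro sum.cong refl sum.swap)
  finally show ?thesis .
qed

lemma sum_return_exp_origin_le:
  assumes q: "0 \<le> q" "q \<le> 1" and p: "p \<in> {0..1}"
  shows "(\<Sum>n<N. return_exp p q n ({}, 0))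
    \<le> 1 + (\<Sum>a<N. \<Sum>b<N. q ^ (a + b + 1) * (\<Sum>n<N. killed_exp (up_prob p) {- int a..int b} n 0 (indicator {0})))"
proof -
  let ?G = "\<lambda>n a b. killed_exp (up_prob p) {- int a..int b} n 0 (indicator {0})"
  have "(\<Sum>n<N. return_exp p q n ({}, 0))
      \<le> (\<Sum>n<N. (if n = 0 then 1 else 0) + (\<Sum>a<N. \<Sum>b<N. q ^ (a + b + 1) * ?G n a b))"
  proof (intro sum_mono)
    fix n assume "n \<in> {..<N}"
    moreover have "0 \<le> ?G n a b" for a b
      by (intro killed_exp_nonneg up_prob_range[OF p]) simp
    ultimately show "return_exp p q n ({}, 0) \<le> (if n = 0 then 1 else 0) + (\<Sum>a<N. \<Sum>b<N. q ^ (a + b + 1) * ?G n a b)"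
      using return_exp_origin_le[OF q p, of n N] q
      by (cases "n = 0") (auto simp: return_exp_def touched_def intro!: sum_nonneg)
  qed
  also have "\<dots> = (\<Sum>n<N. if n = 0 then 1 else 0) + (\<Sum>a<N. \<Sum>b<N. \<Sum>n<N. q ^ (a + b + 1) * ?G n a b)"
    unfolding sum.distrib by (subst sum_swap3) (rule refl)
  also have "\<dots> \<le> 1 + (\<Sum>a<N. \<Sum>b<N. q ^ (a + b + 1) * (\<Sum>n<N. ?G n a b))"
    by (simp add: sum_distrib_left)
  finally show ?thesis .
qed

lemma summable_return_exp_origin:
  assumes p: "1/2 < p" "p < 1" and q: "0 \<le> q" "q\<^sup>2 * odds p < 1"
  shows "summable (\<lambda>n. return_exp p q n ({}, 0))"
proof -
  define r where "r = odds p"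
  have r: "1 < r"
    using odds_gt_1[OF p] by (simp add: r_def)
  have p01: "p \<in> {0..1}"
    using p by simp
  have q2: "q\<^sup>2 < 1"
    using q r mult_left_mono[of 1 r "q\<^sup>2"] by (simp add: r_def)
  then have q1: "q \<le> 1"
    using q abs_square_less_1[of q] by simp
  define x where "x = q * sqrt r"
  have x: "0 \<le> x" "x < 1"
    using q r abs_square_less_1[of x] by (simp_all add: x_def power_mult_distrib r_def)
  define K where "K = 2 * r / (r - 1)"
  have K: "0 \<le> K"
    using r by (simp add: K_def)
  have summand: "q ^ (a + b + 1) * (\<Sum>n<N. killed_exp (up_prob p) {- int a..int b} n 0 (indicator {0}))
      \<le> K * q * (x ^ a * x ^ b)" for N a b
  proof -
    have "q ^ (a + b + 1) * (\<Sum>n<N. killed_exp (up_prob p) {- int a..int b} n 0 (indicator {0}))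
        \<le> q ^ (a + b + 1) * (K * sqrt r ^ (a + b))"
      using green_interval_le_sqrt[OF p, where N = N and a = a and b = b] q
      by (intro mult_left_mono) (auto simp: K_def r_def)
    also have "\<dots> = K * q * (x ^ a * x ^ b)"
      by (simp add: x_def power_mult_distrib power_add)
    finally show ?thesis .
  qed
  have geom: "(\<Sum>a<N. x ^ a) \<le> 1 / (1 - x)" for N
    using x by (simp add: sum_gp_strict divide_right_mono)
  have "(\<Sum>n<N. return_exp p q n ({}, 0)) \<le> 1 + K * q * (1 / (1 - x)) * (1 / (1 - x))" for N
  proof -
    have "(\<Sum>n<N. return_exp p q n ({}, 0)) \<le> 1 + (\<Sum>a<N. \<Sum>b<N. K * q * (x ^ a * x ^ b))"
      using sum_return_exp_origin_le[OF q(1) q1 p01, of N]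
      by (rule order.trans) (intro add_left_mono sum_mono summand)
    also have "\<dots> = 1 + K * q * (\<Sum>a<N. x ^ a) * (\<Sum>b<N. x ^ b)"
      by (simp add: sum_distrib_left sum_distrib_right mult_ac)
    also have "\<dots> \<le> 1 + K * q * (1 / (1 - x)) * (1 / (1 - x))"
      using K q x geom by (intro add_left_mono mult_mono mult_nonneg_nonneg sum_nonneg) auto
    finally show ?thesis .
  qed
  then show ?thesis
    using p01 q by (intro summableI_nonneg_bounded return_exp_nonneg)
qed

lemma sum_odd_power_weights_le:
  fixes q :: real
  assumes "0 \<le> q" "q \<le> 1"
  shows "(\<Sum>s\<in>{1..S}. if K \<le> 2 * s + 1 then (1 - q\<^sup>2) * q ^ (2 * s + 1) else 0) \<le> q ^ K"
proof -
  have "(\<Sum>s\<in>{1..S}. if K \<le> 2 * s + 1 then (1 - q\<^sup>2) * q ^ (2 * s + 1) else 0)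
      \<le> (if K \<le> 2 * S + 1 then q ^ K - q ^ (2 * S + 3) else 0)"
  proof (induction S)
    case 0
    then show ?case
      using assms by (auto intro!: power_decreasing)
  next
    case (Suc S)
    let ?F = "\<lambda>s. if K \<le> 2 * s + 1 then (1 - q\<^sup>2) * q ^ (2 * s + 1) else 0"
    define m where "m = 2 * S + 3"
    have m: "2 * Suc S + 1 = m" "2 * Suc S + 3 = m + 2" "2 * S + 1 < m"
      by (simp_all add: m_def)
    have tail: "(1 - q\<^sup>2) * q ^ m = q ^ m - q ^ (m + 2)"
      by (simp add: power_add power2_eq_square algebra_simps)
    have "(\<Sum>s\<in>{1..Suc S}. ?F s) = (\<Sum>s\<in>{1..S}. ?F s) + ?F (Suc S)"
      by (subst sum.cl_ivl_Suc) simp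
    moreover have "q ^ m \<le> q ^ K" if "K \<le> m"
      using that assms by (intro power_decreasing) auto
    ultimately show ?case
      using Suc.IH m(3) tail unfolding m(1,2) m_def[symmetric]
      by (cases "K \<le> 2 * S + 1"; cases "K \<le> m") (simp_all del: power_Suc)
  qed
  also have "\<dots> \<le> q ^ K"
    using assms by auto
  finally show ?thesis .
qed

lemma odd_power_weights_le_power_card:
  fixes q :: real
  assumes "0 \<le> q" "q \<le> 1"
  shows "(\<Sum>s\<in>{1..S}. (1 - q\<^sup>2) * q ^ (2 * s + 1) * (if set l \<subseteq> {- int s..int s} then 1 else 0))
    \<le> q ^ card (touched l)"
proof -
  have "card (touched l) \<le> 2 * s + 1" if "set l \<subseteq> {- int s..int s}" for s
  proof -
    have "card (touched l) \<le> card {- int s..int s}"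
      using that by (intro card_mono) (auto simp: touched_def)
    then show ?thesis
      by simp
  qed
  moreover have "0 \<le> 1 - q\<^sup>2"
    using assms by (simp add: power_le_one)
  ultimately have "(\<Sum>s\<in>{1..S}. (1 - q\<^sup>2) * q ^ (2 * s + 1) * (if set l \<subseteq> {- int s..int s} then 1 else 0))
      \<le> (\<Sum>s\<in>{1..S}. if card (touched l) \<le> 2 * s + 1 then (1 - q\<^sup>2) * q ^ (2 * s + 1) else 0)"
    using assms by (intro sum_mono) auto
  also have "\<dots> \<le> q ^ card (touched l)"
    by (rule sum_odd_power_weights_le[OF assms])
  finally show ?thesis .
qed

lemma sum_return_exp_origin_ge:
  assumes q: "0 \<le> q" "q \<le> 1" and p: "p \<in> {0..1}"
  shows "(\<Sum>s\<in>{1..S}. (1 - q\<^sup>2) * q ^ (2 * s + 1) *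
      (\<Sum>n<N. killed_exp (up_prob p) {- int s..int s} n 0 (indicator {0})))
    \<le> (\<Sum>n<N. return_exp p q n ({}, 0))"
proof -
  let ?w = "\<lambda>s. (1 - q\<^sup>2) * q ^ (2 * s + 1)"
  let ?G = "\<lambda>n s. killed_exp (up_prob p) {- int s..int s} n 0 (indicator {0})"
  have "(\<Sum>s\<in>{1..S}. ?w s * (\<Sum>n<N. ?G n s)) = (\<Sum>n<N. \<Sum>s\<in>{1..S}. ?w s * ?G n s)"
    by (simp add: sum_distrib_left) (rule sum.swap)
  also have "\<dots> \<le> (\<Sum>n<N. return_exp p q n ({}, 0))"
  proof (rule sum_mono)
    fix n
    have "(\<Sum>s\<in>{1..S}. ?w s * ?G n s) = path_exp (up_prob p) n 0
        (\<lambda>l. \<Sum>s\<in>{1..S}. ?w s * (if set l \<subseteq> {- int s..int s} then indicator {0} (last l) else 0))"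
      by (simp add: path_exp_sum path_exp_cmult killed_exp_def)
    also have "\<dots> \<le> return_exp p q n ({}, 0)"
      unfolding return_exp_origin
    proof (rule path_exp_mono[OF up_prob_range[OF p]])
      fix l
      show "(\<Sum>s\<in>{1..S}. ?w s * (if set l \<subseteq> {- int s..int s} then indicator {0} (last l) else 0))
          \<le> (if last l = 0 then q ^ card (touched l) else 0)"
        using odd_power_weights_le_power_card[where q = q and S = S and l = l] q
        by (cases "last l = 0") (simp_all cong: if_cong)
    qed
    finally show "(\<Sum>s\<in>{1..S}. ?w s * ?G n s) \<le> return_exp p q n ({}, 0)" .
  qed
  finally show ?thesis .
qed

lemma odd_power_weight_ge:
  fixes q r :: real
  assumes "0 \<le> q" "q \<le> 1" "1 \<le> q\<^sup>2 * r"
  shows "(1 - q\<^sup>2) * q \<le> (1 - q\<^sup>2) * q ^ (2 * s + 1) * r ^ s"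
proof -
  have "(1 - q\<^sup>2) * q * 1 \<le> (1 - q\<^sup>2) * q * (q\<^sup>2 * r) ^ s"
    using assms by (intro mult_left_mono one_le_power) (auto simp: power_le_one)
  also have "(q\<^sup>2 * r) ^ s = q ^ (2 * s) * r ^ s"
    by (simp add: power_mult_distrib power_mult)
  finally show ?thesis
    by (simp only: mult_1_right power_add power_one_right mult_ac)
qed

text \<open>For \<open>q\<^sup>2 * odds p \<ge> 1\<close> the weight \<open>(1 - q\<^sup>2) * q ^ (2 * s + 1)\<close> of the range
  \<open>[-s, s]\<close> makes up for the growth \<open>odds p ^ s\<close> of its Green function, so every
  \<open>s\<close> contributes a fixed amount to the partial sums.\<close>
lemma not_summable_return_exp_origin:
  assumes p: "1/2 < p" "p < 1" and q: "0 < q" "q < 1" "1 \<le> q\<^sup>2 * odds p"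
  shows "\<not> summable (\<lambda>n. return_exp p q n ({}, 0))"
proof
  assume summable: "summable (\<lambda>n. return_exp p q n ({}, 0))"
  let ?G = "\<lambda>n s. killed_exp (up_prob p) {- int s..int s} n 0 (indicator {0})"
  let ?w = "\<lambda>s. (1 - q\<^sup>2) * q ^ (2 * s + 1)"
  have p01: "p \<in> {0..1}"
    using p by simp
  have q2: "q\<^sup>2 < 1"
    using q by (simp add: power_less_one_iff)
  define c where "c = (1 - q\<^sup>2) * q"
  have c: "0 < c"
    using q q2 by (simp add: c_def)
  define S where "S = nat \<lceil>2 * ((\<Sum>n. return_exp p q n ({}, 0)) + 1) / c\<rceil>"
  have "eventually (\<lambda>N. \<forall>s\<in>{1..S}. odds p ^ s / 2 \<le> (\<Sum>n<N. ?G n s)) sequentially"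
    using eventually_green_symmetric_ge[OF p] by (simp add: eventually_ball_finite)
  then obtain N where N: "\<forall>s\<in>{1..S}. odds p ^ s / 2 \<le> (\<Sum>n<N. ?G n s)"
    unfolding eventually_sequentially by (meson order_refl)
  have "2 * ((\<Sum>n. return_exp p q n ({}, 0)) + 1) / c \<le> real S"
    unfolding S_def by (rule real_nat_ceiling_ge)
  then have "(\<Sum>n. return_exp p q n ({}, 0)) + 1 \<le> (\<Sum>s\<in>{1..S}. c / 2)"
    using c by (simp add: pos_divide_le_eq)
  also have "\<dots> \<le> (\<Sum>s\<in>{1..S}. ?w s * (\<Sum>n<N. ?G n s))"
  proof (rule sum_mono)
    fix s assume s: "s \<in> {1..S}"
    have "c / 2 \<le> ?w s * (odds p ^ s / 2)"
      using odd_power_weight_ge[of q "odds p" s] q by (simp add: c_def)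
    also have "\<dots> \<le> ?w s * (\<Sum>n<N. ?G n s)"
      using N s q q2 by (intro mult_left_mono) auto
    finally show "c / 2 \<le> ?w s * (\<Sum>n<N. ?G n s)" .
  qed
  also have "\<dots> \<le> (\<Sum>n<N. return_exp p q n ({}, 0))"
    using q by (intro sum_return_exp_origin_ge p01) auto
  also have "\<dots> \<le> (\<Sum>n. return_exp p q n ({}, 0))"
    using q by (intro sum_le_suminf summable return_exp_nonneg p01) auto
  finally show False
    by simp
qed

section \<open>Walks driven by i.i.d. noise\<close>

definition walk :: "('s \<Rightarrow> 'f \<Rightarrow> 's) \<Rightarrow> 's \<Rightarrow> 'f stream \<Rightarrow> nat \<Rightarrow> 's" where
  "walk step s \<omega> n = foldl step s (stake n \<omega>)"

lemma walk_0 [simp]: "walk step s \<omega> 0 = s"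
  by (simp add: walk_def)

lemma walk_Stream_Suc [simp]: "walk step s (e ## \<omega>) (Suc n) = walk step (step s e) \<omega> n"
  by (simp add: walk_def)

lemma walk_Suc: "walk step s \<omega> (Suc n) = step (walk step s \<omega> n) (\<omega> !! n)"
  unfolding walk_def stake_Suc by simp

lemma walk_add: "walk step s \<omega> (n + k) = walk step (walk step s \<omega> n) (sdrop n \<omega>) k"
  unfolding walk_def by (metis foldl_append stake_add)

lemma pred_walk [measurable]:
  "Measurable.pred (stream_space (count_space UNIV)) (\<lambda>\<omega>. walk step s (\<omega> :: 'f::countable stream) n = t)"
  unfolding walk_def by measurable

lemma walk_last_visit:
  assumes "finite {n. walk step t \<omega> n = t}"
  obtains n where "walk step t \<omega> n = t" "\<And>k. 0 < k \<Longrightarrow> walk step t (sdrop n \<omega>) k \<noteq> t"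
proof
  let ?n = "Max {n. walk step t \<omega> n = t}"
  show "walk step t \<omega> ?n = t"
    using Max_in[OF assms] by (metis (mono_tags) empty_iff mem_Collect_eq walk_0)
  then show "walk step t (sdrop ?n \<omega>) k \<noteq> t" if "0 < k" for k
    using Max_ge[OF assms, of "?n + k"] that by (auto simp: walk_add)
qed

lemma walk_no_return_after:
  assumes "walk step t \<omega> n = t" "\<And>k. 0 < k \<Longrightarrow> walk step t (sdrop n \<omega>) k \<noteq> t"
    and "walk step t \<omega> m = t"
  shows "m \<le> n"
proof (rule ccontr)
  assume "\<not> m \<le> n"
  then have "walk step t (sdrop n \<omega>) (m - n) = t"
    using assms(1,3) walk_add[of step t \<omega> n "m - n"] by simp
  with assms(2)[of "m - n"] \<open>\<not> m \<le> n\<close> show False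
    by simp
qed

text \<open>The noise enters only through an observation \<open>\<kappa>\<close> with finite range, which turns
  the first-step decomposition into a finite sum.\<close>
locale iid_walk =
  fixes N :: "'e pmf" and \<kappa> :: "'e \<Rightarrow> 'f::finite" and step :: "'s \<Rightarrow> 'f \<Rightarrow> 's"
begin

abbreviation "M \<equiv> stream_space (measure_pmf N)"

definition hit_prob :: "nat \<Rightarrow> 's \<Rightarrow> 's \<Rightarrow> real" where
  "hit_prob n s t = \<P>(\<omega> in M. walk step s (smap \<kappa> \<omega>) n = t)"

lemma prob_space_M: "prob_space M"
  by (rule prob_space.prob_space_stream_space[OF prob_space_measure_pmf])

lemma measurable_smap_obs [measurable]: "smap \<kappa> \<in> measurable M (stream_space (count_space UNIV))"
  by (rule measurable_smap) simp

lemma prob_first_step: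
  assumes [measurable]: "Measurable.pred (stream_space (count_space UNIV)) P"
  shows "\<P>(\<omega> in M. P (smap \<kappa> \<omega>)) = (\<Sum>e\<in>UNIV. pmf (map_pmf \<kappa> N) e * \<P>(\<omega> in M. P (e ## smap \<kappa> \<omega>)))"
proof -
  have "ennreal \<P>(\<omega> in M. P (smap \<kappa> \<omega>)) = (\<integral>\<^sup>+x. ennreal \<P>(\<omega> in M. P (smap \<kappa> (x ## \<omega>))) \<partial>N)"
    by (rule prob_space.prob_stream_space[OF prob_space_measure_pmf]) measurable
  also have "\<dots> = (\<integral>\<^sup>+e. ennreal \<P>(\<omega> in M. P (e ## smap \<kappa> \<omega>)) \<partial>map_pmf \<kappa> N)"
    by simp
  also have "\<dots> = (\<Sum>e\<in>UNIV. ennreal \<P>(\<omega> in M. P (e ## smap \<kappa> \<omega>)) * pmf (map_pmf \<kappa> N) e)"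
    by (rule nn_integral_measure_pmf_support) auto
  also have "\<dots> = (\<Sum>e\<in>UNIV. ennreal (pmf (map_pmf \<kappa> N) e * \<P>(\<omega> in M. P (e ## smap \<kappa> \<omega>))))"
    by (simp add: ennreal_mult mult.commute)
  also have "\<dots> = ennreal (\<Sum>e\<in>UNIV. pmf (map_pmf \<kappa> N) e * \<P>(\<omega> in M. P (e ## smap \<kappa> \<omega>)))"
    by (rule sum_ennreal) simp
  finally show ?thesis
    by (simp add: sum_nonneg)
qed

lemma hit_prob_0: "hit_prob 0 s t = (if s = t then 1 else 0)"
  using prob_space.prob_space[OF prob_space_M] by (simp add: hit_prob_def)

lemma hit_prob_Suc:
  "hit_prob (Suc n) s t = (\<Sum>e\<in>UNIV. pmf (map_pmf \<kappa> N) e * hit_prob n (step s e) t)"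
  unfolding hit_prob_def using prob_first_step[of "\<lambda>\<omega>. walk step s \<omega> (Suc n) = t"] by simp

lemma prob_walk_sdrop:
  assumes [measurable]: "Measurable.pred (stream_space (count_space UNIV)) Q"
  shows "\<P>(\<omega> in M. walk step s (smap \<kappa> \<omega>) n = t \<and> Q (sdrop n (smap \<kappa> \<omega>)))
    = hit_prob n s t * \<P>(\<omega> in M. Q (smap \<kappa> \<omega>))"
proof (induction n arbitrary: s)
  case 0
  then show ?case
    by (simp add: hit_prob_0)
next
  case (Suc n)
  have "Measurable.pred (stream_space (count_space UNIV)) (\<lambda>\<omega>. walk step s \<omega> (Suc n) = t \<and> Q (sdrop (Suc n) \<omega>))"
    by measurable
  from prob_first_step[OF this]
  have "\<P>(\<omega> in M. walk step s (smap \<kappa> \<omega>) (Suc n) = t \<and> Q (sdrop (Suc n) (smap \<kappa> \<omega>)))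
      = (\<Sum>e\<in>UNIV. pmf (map_pmf \<kappa> N) e *
          \<P>(\<omega> in M. walk step (step s e) (smap \<kappa> \<omega>) n = t \<and> Q (sdrop n (smap \<kappa> \<omega>))))"
    by (simp only: walk_Stream_Suc sdrop.simps stream.sel)
  also have "\<dots> = hit_prob (Suc n) s t * \<P>(\<omega> in M. Q (smap \<kappa> \<omega>))"
    by (simp only: Suc.IH hit_prob_Suc sum_distrib_right mult.assoc)
  finally show ?case .
qed

lemma AE_finite_visits:
  assumes "summable (\<lambda>n. hit_prob n t t)"
  shows "AE \<omega> in M. finite {n. walk step t (smap \<kappa> \<omega>) n = t}"
proof -
  interpret M: prob_space M
    by (rule prob_space_M)
  have "AE \<omega> in M. eventually (\<lambda>n. \<omega> \<in> space M - {\<omega> \<in> space M. walk step t (smap \<kappa> \<omega>) n = t}) sequentially"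
    using assms by (intro borel_cantelli_AE1) (simp_all add: hit_prob_def M.emeasure_eq_measure)
  then show ?thesis
  proof (rule AE_mp, intro AE_I2 impI)
    fix \<omega> assume "eventually (\<lambda>n. \<omega> \<in> space M - {\<omega> \<in> space M. walk step t (smap \<kappa> \<omega>) n = t}) sequentially"
    then obtain n0 where "\<And>n. n0 \<le> n \<Longrightarrow> walk step t (smap \<kappa> \<omega>) n \<noteq> t"
      by (auto simp: eventually_sequentially)
    then have "{n. walk step t (smap \<kappa> \<omega>) n = t} \<subseteq> {..<n0}"
      by (auto simp: not_le[symmetric])
    then show "finite {n. walk step t (smap \<kappa> \<omega>) n = t}"
      by (rule finite_subset) simp
  qed
qed

definition last_visit :: "'s \<Rightarrow> nat \<Rightarrow> 'e stream set" where
  "last_visit t n = {\<omega> \<in> space M. walk step t (smap \<kappa> \<omega>) n = t \<and>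
     (\<forall>k>0. walk step t (sdrop n (smap \<kappa> \<omega>)) k \<noteq> t)}"

lemma sets_last_visit [measurable]: "last_visit t n \<in> sets M"
  unfolding last_visit_def by measurable

lemma prob_last_visit:
  "measure M (last_visit t n) = hit_prob n t t * \<P>(\<omega> in M. \<forall>k>0. walk step t (smap \<kappa> \<omega>) k \<noteq> t)"
  unfolding last_visit_def by (rule prob_walk_sdrop) measurable

lemma disjoint_family_last_visit: "disjoint_family (last_visit t)"
  unfolding disjoint_family_on_def
proof (intro ballI impI)
  fix m n :: nat assume "m \<noteq> n"
  have "m \<le> n \<and> n \<le> m" if "\<omega> \<in> last_visit t m" "\<omega> \<in> last_visit t n" for \<omega>
    using that walk_no_return_after[of step t "smap \<kappa> \<omega>" m n] walk_no_return_after[of step t "smap \<kappa> \<omega>" n m]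
    unfolding last_visit_def by (auto simp del: sdrop_smap)
  with \<open>m \<noteq> n\<close> show "last_visit t m \<inter> last_visit t n = {}"
    by fastforce
qed

text \<open>The last visits at different times are disjoint events of probability
  \<open>hit_prob n t t\<close> times the probability of never returning, so a divergent series forces
  the latter to vanish.\<close>
lemma prob_no_return_eq_0:
  assumes "\<not> summable (\<lambda>n. hit_prob n t t)"
  shows "\<P>(\<omega> in M. \<forall>k>0. walk step t (smap \<kappa> \<omega>) k \<noteq> t) = 0"
proof -
  interpret M: prob_space M
    by (rule prob_space_M)
  have "range (last_visit t) \<subseteq> sets M"
    by auto
  then have "summable (\<lambda>n. measure M (last_visit t n))"
    using M.finite_measure_UNION disjoint_family_last_visit by (blast intro: sums_summable)
  then have "summable (\<lambda>n. hit_prob n t t * \<P>(\<omega> in M. \<forall>k>0. walk step t (smap \<kappa> \<omega>) k \<noteq> t)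
      / \<P>(\<omega> in M. \<forall>k>0. walk step t (smap \<kappa> \<omega>) k \<noteq> t))"
    unfolding prob_last_visit by (rule summable_divide)
  with assms show ?thesis
    by (cases "\<P>(\<omega> in M. \<forall>k>0. walk step t (smap \<kappa> \<omega>) k \<noteq> t) = 0") auto
qed

lemma AE_infinite_visits:
  assumes "\<not> summable (\<lambda>n. hit_prob n t t)"
  shows "AE \<omega> in M. infinite {n. walk step t (smap \<kappa> \<omega>) n = t}"
proof (rule AE_I')
  interpret M: prob_space M
    by (rule prob_space_M)
  show "(\<Union>n. last_visit t n) \<in> null_sets M"
    using prob_last_visit prob_no_return_eq_0[OF assms]
    by (intro null_sets_UN) (auto simp: M.emeasure_eq_measure)
  show "{\<omega> \<in> space M. \<not> infinite {n. walk step t (smap \<kappa> \<omega>) n = t}} \<subseteq> (\<Union>n. last_visit t n)"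
  proof
    fix \<omega> assume "\<omega> \<in> {\<omega> \<in> space M. \<not> infinite {n. walk step t (smap \<kappa> \<omega>) n = t}}"
    then have "finite {n. walk step t (smap \<kappa> \<omega>) n = t}"
      by simp
    then obtain n where "walk step t (smap \<kappa> \<omega>) n = t" "\<forall>k>0. walk step t (sdrop n (smap \<kappa> \<omega>)) k \<noteq> t"
      by (rule walk_last_visit) blast
    then show "\<omega> \<in> (\<Union>n. last_visit t n)"
      by (auto simp: last_visit_def space_stream_space simp del: sdrop_smap)
  qed
qed

end

section \<open>The lamplighter walk\<close>

text \<open>The two booleans after the coins record whether the newly drawn lamp values differ
  from the identity.\<close>
definition lit_step :: "int set \<times> int \<Rightarrow> bool \<times> bool \<times> bool \<times> bool \<Rightarrow> int set \<times> int" where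
  "lit_step = (\<lambda>(Z, x) (c, d, bu, bv). let y = base_step x c d in
     ((Z - {x, y}) \<union> (if bu then {x} else {}) \<union> (if bv then {y} else {}), y))"

definition lit_flags :: "('a, 'b) monoid_scheme \<Rightarrow> bool \<times> bool \<times> 'a \<times> 'a \<Rightarrow> bool \<times> bool \<times> bool \<times> bool" where
  "lit_flags F = (\<lambda>(c, d, u, v). (c, d, u \<noteq> \<one>\<^bsub>F\<^esub>, v \<noteq> \<one>\<^bsub>F\<^esub>))"

definition lit_noise :: "real \<Rightarrow> real \<Rightarrow> (bool \<times> bool \<times> bool \<times> bool) pmf" where
  "lit_noise p q = pair_pmf (bernoulli_pmf p)
     (pair_pmf (bernoulli_pmf (1/2)) (pair_pmf (bernoulli_pmf (1 - q)) (bernoulli_pmf (1 - q))))"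

lemma base_step_neq: "base_step x c d \<noteq> x"
  by (auto simp: base_step_def)

lemma lamp_walk_lit_state:
  "lamp_walk F \<omega> n = (L, x) \<Longrightarrow> walk lit_step ({}, 0) (smap (lit_flags F) \<omega>) n = ({i. L i \<noteq> \<one>\<^bsub>F\<^esub>}, x)"
proof (induction n arbitrary: L x)
  case 0
  then show ?case
    by (auto simp: lamp_id_def)
next
  case (Suc n)
  obtain L0 x0 where prev: "lamp_walk F \<omega> n = (L0, x0)"
    by fastforce
  obtain c d u v where e: "\<omega> !! n = (c, d, u, v)"
    by (cases "\<omega> !! n") auto
  define y where "y = base_step x0 c d"
  have "L = L0(x0 := u, y := v)" "x = y"
    using Suc.prems prev e by (auto simp: y_def Let_def)
  moreover have "y \<noteq> x0"
    unfolding y_def by (rule base_step_neq)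
  ultimately show ?case
    using Suc.IH[OF prev] e by (auto simp: walk_Suc lit_step_def lit_flags_def y_def[symmetric])
qed

lemma lamp_walk_eq_id_iff:
  "lamp_walk F \<omega> n = lamp_id F \<longleftrightarrow> walk lit_step ({}, 0) (smap (lit_flags F) \<omega>) n = ({}, 0)"
proof -
  obtain L x where "lamp_walk F \<omega> n = (L, x)"
    by fastforce
  with lamp_walk_lit_state[OF this] show ?thesis
    by (auto simp: lamp_id_def fun_eq_iff)
qed

lemma map_pmf_neq_one_uniform:
  assumes "finite (carrier F)" "\<one>\<^bsub>F\<^esub> \<in> carrier F"
  shows "map_pmf (\<lambda>u. u \<noteq> \<one>\<^bsub>F\<^esub>) (pmf_of_set (carrier F)) = bernoulli_pmf (1 - 1 / real (card (carrier F)))"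
proof (rule pmf_eqI)
  fix b
  define c where "c = real (card (carrier F))"
  have ne: "carrier F \<noteq> {}" and card: "1 \<le> card (carrier F)"
    using assms by (auto simp: Suc_le_eq card_gt_0_iff)
  then have c: "1 \<le> c"
    by (simp add: c_def)
  have bernoulli: "pmf (bernoulli_pmf (1 - 1 / c)) b' = (if b' then 1 - 1 / c else 1 / c)" for b'
    using c by (cases b') (simp_all add: field_simps)
  have "pmf (map_pmf (\<lambda>u. u \<noteq> \<one>\<^bsub>F\<^esub>) (pmf_of_set (carrier F))) b
      = real (card (carrier F \<inter> {u. (u \<noteq> \<one>\<^bsub>F\<^esub>) = b})) / c"
    using assms(1) ne by (simp add: pmf_map measure_pmf_of_set vimage_def c_def)
  also have "\<dots> = pmf (bernoulli_pmf (1 - 1 / c)) b"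
  proof (cases b)
    case True
    have "carrier F \<inter> {u. (u \<noteq> \<one>\<^bsub>F\<^esub>) = b} = carrier F - {\<one>\<^bsub>F\<^esub>}"
      using True by auto
    then show ?thesis
      using True assms c card by (simp add: bernoulli c_def[symmetric] diff_divide_distrib)
  next
    case False
    have "carrier F \<inter> {u. (u \<noteq> \<one>\<^bsub>F\<^esub>) = b} = {\<one>\<^bsub>F\<^esub>}"
      using False assms by auto
    then show ?thesis
      using False by (simp add: bernoulli)
  qed
  finally show "pmf (map_pmf (\<lambda>u. u \<noteq> \<one>\<^bsub>F\<^esub>) (pmf_of_set (carrier F))) b
      = pmf (bernoulli_pmf (1 - 1 / real (card (carrier F)))) b"
    by (simp add: c_def)
qed

lemma map_pmf_lit_flags:
  assumes "finite (carrier F)" "\<one>\<^bsub>F\<^esub> \<in> carrier F"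
  shows "map_pmf (lit_flags F) (lamp_noise F p) = lit_noise p (1 / real (card (carrier F)))"
proof -
  have "lit_flags F = (\<lambda>(c, r). (id c, (\<lambda>(d, r'). (id d, (\<lambda>(u, v). (u \<noteq> \<one>\<^bsub>F\<^esub>, v \<noteq> \<one>\<^bsub>F\<^esub>)) r')) r))"
    by (auto simp: lit_flags_def fun_eq_iff)
  then show ?thesis
    by (simp add: lamp_noise_def lit_noise_def map_pair map_pmf_neq_one_uniform[OF assms])
qed

lemma sum_UNIV_prod:
  fixes g :: "'a::finite \<times> 'b::finite \<Rightarrow> 'c::comm_monoid_add"
  shows "(\<Sum>z\<in>UNIV. g z) = (\<Sum>x\<in>UNIV. \<Sum>y\<in>UNIV. g (x, y))"
  by (simp add: sum.cartesian_product flip: UNIV_Times_UNIV)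

lemma sum_bernoulli_base_step:
  assumes "p \<in> {0..1}"
  shows "(\<Sum>c\<in>UNIV. \<Sum>d\<in>UNIV. pmf (bernoulli_pmf p) c * pmf (bernoulli_pmf (1/2)) d * H (base_step x c d))
    = mean_step (up_prob p) H x"
  using assms by (simp add: UNIV_bool base_step_def mean_step_def up_prob_def field_simps)

text \<open>A step from \<open>x\<close> to \<open>y\<close> redraws the lamps at both sites. If the remaining path
  never comes back to \<open>x\<close>, the lamp there must be off, which costs a factor \<open>q\<close>.\<close>
lemma sum_redrawn_lamps_visited:
  fixes q :: real
  assumes q: "q \<in> {0..1}" and "finite T" "y \<in> T"
  shows "(\<Sum>bu\<in>UNIV. \<Sum>bv\<in>UNIV. pmf (bernoulli_pmf (1 - q)) bu * pmf (bernoulli_pmf (1 - q)) bv *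
      (if P \<and> (Z - {x, y}) \<union> (if bu then {x} else {}) \<union> (if bv then {y} else {}) \<subseteq> T
       then q ^ card T else 0))
    = (if P \<and> Z \<subseteq> insert x T then q ^ card (insert x T) else 0)"
proof (cases "x \<in> T")
  case True
  then have "(Z - {x, y}) \<union> (if bu then {x} else {}) \<union> (if bv then {y} else {}) \<subseteq> T
      \<longleftrightarrow> Z \<subseteq> T" for bu bv
    using assms by auto
  moreover have "insert x T = T"
    using True by auto
  ultimately show ?thesis
    using q by (simp add: UNIV_bool algebra_simps)
next
  case False
  then have "(Z - {x, y}) \<union> (if bu then {x} else {}) \<union> (if bv then {y} else {}) \<subseteq> T
      \<longleftrightarrow> \<not> bu \<and> Z \<subseteq> insert x T" for bu bv
    using assms by auto
  moreover have "card (insert x T) = Suc (card T)"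
    using False assms by simp
  ultimately show ?thesis
    using q by (simp add: UNIV_bool algebra_simps)
qed

lemma sum_redrawn_lamps:
  fixes q :: real
  assumes q: "q \<in> {0..1}" and l: "l \<in> nn_paths n y" and "x \<noteq> y"
  shows "(\<Sum>bu\<in>UNIV. \<Sum>bv\<in>UNIV. pmf (bernoulli_pmf (1 - q)) bu * pmf (bernoulli_pmf (1 - q)) bv *
      (if last l = 0 \<and> (Z - {x, y}) \<union> (if bu then {x} else {}) \<union> (if bv then {y} else {}) \<subseteq> touched l
       then q ^ card (touched l) else 0))
    = (if last (x # l) = 0 \<and> Z \<subseteq> touched (x # l) then q ^ card (touched (x # l)) else 0)"
proof -
  have y: "y \<in> set l" and ne: "l \<noteq> []"
    using start_in_nn_paths[OF l] nn_paths_not_Nil[OF l] .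
  have last: "last (x # l) = last l" and touched: "touched (x # l) = insert x (set l)"
    using ne by (simp_all add: touched_def)
  show ?thesis
  proof (cases n)
    case 0
    then have "l = [y]"
      using l by simp
    then show ?thesis
      using q \<open>x \<noteq> y\<close> unfolding last touched
      by (auto simp: UNIV_bool touched_def power2_eq_square insert_commute)
  next
    case (Suc k)
    have "tl l \<noteq> []"
      using length_nn_paths[OF l] Suc by (cases l) auto
    then have T: "touched l = set l"
      by (simp add: touched_def)
    show ?thesis
      unfolding last touched T by (intro sum_redrawn_lamps_visited[OF q _ y]) simp
  qed
qed

lemma return_exp_Suc:
  assumes p: "p \<in> {0..1}" and q: "q \<in> {0..1}"
  shows "(\<Sum>e\<in>UNIV. pmf (lit_noise p q) e * return_exp p q n (lit_step s e)) = return_exp p q (Suc n) s"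
proof -
  obtain Z x where s: "s = (Z, x)"
    by fastforce
  define f where "f l = (if last l = 0 \<and> Z \<subseteq> touched l then q ^ card (touched l) else 0)" for l
  define H where "H y = path_exp (up_prob p) n y (\<lambda>l. f (x # l))" for y
  let ?lamp = "\<lambda>b. pmf (bernoulli_pmf (1 - q)) b"
  have redrawn: "(\<Sum>bu\<in>UNIV. \<Sum>bv\<in>UNIV. ?lamp bu * ?lamp bv * return_exp p q n (lit_step (Z, x) (c, d, bu, bv)))
      = H (base_step x c d)" for c d
  proof -
    let ?y = "base_step x c d"
    have "(\<Sum>bu\<in>UNIV. \<Sum>bv\<in>UNIV. ?lamp bu * ?lamp bv * return_exp p q n (lit_step (Z, x) (c, d, bu, bv)))
        = path_exp (up_prob p) n ?y (\<lambda>l. \<Sum>bu\<in>UNIV. \<Sum>bv\<in>UNIV. ?lamp bu * ?lamp bv *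
            (if last l = 0 \<and> (Z - {x, ?y}) \<union> (if bu then {x} else {}) \<union> (if bv then {?y} else {}) \<subseteq> touched l
             then q ^ card (touched l) else 0))"
      by (simp add: lit_step_def Let_def return_exp_def path_exp_sum path_exp_cmult)
    also have "\<dots> = H ?y"
      unfolding H_def f_def using base_step_neq[of x c d]
      by (intro path_exp_cong sum_redrawn_lamps[OF q]) auto
    finally show ?thesis .
  qed
  have "(\<Sum>e\<in>UNIV. pmf (lit_noise p q) e * return_exp p q n (lit_step s e))
      = (\<Sum>c\<in>UNIV. \<Sum>d\<in>UNIV. pmf (bernoulli_pmf p) c * pmf (bernoulli_pmf (1/2)) d *
          (\<Sum>bu\<in>UNIV. \<Sum>bv\<in>UNIV. ?lamp bu * ?lamp bv * return_exp p q n (lit_step (Z, x) (c, d, bu, bv))))"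
    by (simp add: s lit_noise_def pmf_pair sum_UNIV_prod[where 'a = bool] sum_distrib_left mult_ac)
  also have "\<dots> = mean_step (up_prob p) H x"
    unfolding redrawn by (rule sum_bernoulli_base_step[OF p])
  also have "\<dots> = return_exp p q (Suc n) s"
    by (simp add: s return_exp_def H_def[abs_def] f_def)
  finally show ?thesis .
qed

lemma hit_prob_lamp:
  assumes "finite (carrier F)" "\<one>\<^bsub>F\<^esub> \<in> carrier F" "p \<in> {0..1}"
  shows "iid_walk.hit_prob (lamp_noise F p) (lit_flags F) lit_step n s ({}, 0)
    = return_exp p (1 / real (card (carrier F))) n s"
proof (induction n arbitrary: s)
  case 0
  then show ?case
    by (cases s) (simp add: iid_walk.hit_prob_0 return_exp_def touched_def)
next
  case (Suc n)
  have "1 \<le> real (card (carrier F))"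
    using assms by (auto simp: Suc_le_eq card_gt_0_iff)
  then have "1 / real (card (carrier F)) \<in> {0..1}"
    by simp
  then show ?case
    by (simp add: iid_walk.hit_prob_Suc map_pmf_lit_flags[OF assms(1,2)] Suc.IH return_exp_Suc[OF assms(3)])
qed

lemma two_le_card_carrier:
  assumes "\<one>\<^bsub>F\<^esub> \<in> carrier F" "finite (carrier F)" "carrier F \<noteq> {\<one>\<^bsub>F\<^esub>}"
  shows "2 \<le> card (carrier F)"
proof -
  obtain g where "g \<in> carrier F" "g \<noteq> \<one>\<^bsub>F\<^esub>"
    using assms(1,3) by blast
  then have "card {\<one>\<^bsub>F\<^esub>, g} \<le> card (carrier F)"
    using assms(1,2) by (intro card_mono) auto
  with \<open>g \<noteq> \<one>\<^bsub>F\<^esub>\<close> show ?thesis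
    by simp
qed

theorem theorem1p1:
  fixes F :: "('a, 'b) monoid_scheme" and p :: real
  assumes "group F" and "finite (carrier F)" and "carrier F \<noteq> {\<one>\<^bsub>F\<^esub>}"
    and "1/2 < p" and "p < 1"
  shows "(p \<ge> real (card (carrier F))^2 / (real (card (carrier F))^2 + 1) \<longrightarrow> lamp_recurrent F p)
       \<and> (p < real (card (carrier F))^2 / (real (card (carrier F))^2 + 1) \<longrightarrow> lamp_transient F p)"
proof -
  let ?m = "real (card (carrier F))"
  define q where "q = 1 / ?m"
  have one: "\<one>\<^bsub>F\<^esub> \<in> carrier F"
    using assms(1) by (simp add: group.is_monoid)
  have m: "2 \<le> ?m"
    using two_le_card_carrier[OF one assms(2,3)] by simp
  then have q: "0 < q" "q < 1"
    by (simp_all add: q_def)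
  have threshold: "?m\<^sup>2 / (?m\<^sup>2 + 1) \<le> p \<longleftrightarrow> 1 \<le> q\<^sup>2 * odds p"
    using m assms(5) by (simp add: le_odds_iff q_def power_divide pos_le_divide_eq)
  have hit: "iid_walk.hit_prob (lamp_noise F p) (lit_flags F) lit_step n ({}, 0) ({}, 0) = return_exp p q n ({}, 0)" for n
    using hit_prob_lamp[OF assms(2) one] assms(4,5) by (simp add: q_def)
  have visits: "{n. lamp_walk F \<omega> n = lamp_id F} = {n. walk lit_step ({}, 0) (smap (lit_flags F) \<omega>) n = ({}, 0)}" for \<omega>
    by (simp add: lamp_walk_eq_id_iff)
  show ?thesis
    unfolding lamp_recurrent_def lamp_transient_def lamp_space_def visits not_le[symmetric] threshold
  proof (intro conjI impI)
    assume "1 \<le> q\<^sup>2 * odds p"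
    then show "AE \<omega> in stream_space (lamp_noise F p). infinite {n. walk lit_step ({}, 0) (smap (lit_flags F) \<omega>) n = ({}, 0)}"
      using not_summable_return_exp_origin[OF assms(4,5) q] by (intro iid_walk.AE_infinite_visits) (simp add: hit)
  next
    assume "\<not> 1 \<le> q\<^sup>2 * odds p"
    then show "AE \<omega> in stream_space (lamp_noise F p). finite {n. walk lit_step ({}, 0) (smap (lit_flags F) \<omega>) n = ({}, 0)}"
      using summable_return_exp_origin[OF assms(4,5)] q by (intro iid_walk.AE_finite_visits) (simp add: hit)
  qed
qed

end
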